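(* Let $k>0$ and fix $\Delta\in\mathbb{N}$. For every integer $n$ with $-\Delta<n<0$ there exists $\gamma_c=\gamma_c(k)\in\mathbb{R}$ such that $\Omega_{n,\gamma_c}=\Omega_{n+\Delta,\gamma_c}$ (the eigenvalues $i\Omega_{n,\gamma}$ and $i\Omega_{n+\Delta,\gamma}$ of $\mathcal H_0(\gamma)$ collide). All such collisions take place away from the origin (i.e. the common value is nonzero), except when $\Delta$ is even and $n=-\Delta/2$, in which case $n+\Delta=-n$ and the eigenvalues $i\Omega_{n,\gamma}$ and $i\Omega_{-n,\gamma}$ collide at the origin.
   Context: For $k>0$, $\gamma\in\mathbb{R}$ and $n\in\mathbb{Z}\setminus\{0\}$, set $\Omega_{n,\gamma}=k^3n(1-n^2)+\frac{3\gamma^2}{kn}$. These are such that $\mathcal H_0(\gamma)e^{inz}=i\Omega_{n,\gamma}e^{inz}$, where $\mathcal H_0(\gamma)=k^3\partial_z+k^3\partial_z^3-\frac{3\gamma^2}{k}\partial_z^{-1}$ on mean-zero $2\pi$-periodic functions (the zero-amplitude case of the linearized Konopelchenko–Dubrovsky operator), so its spectrum is $\{i\Omega_{n,\gamma}:n\in\mathbb{Z}\setminus\{0\}\}$. Two eigenvalues "collide" at $\gamma_c$ if $\Omega_{n,\gamma_c}=\Omega_{m,\gamma_c}$ for $n\ne m$. *)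

theory Defs
  imports Complex_Main
begin

text \<open>Omega k n gamma = k^3 n (1 - n^2) + 3 gamma^2 / (k n), the imaginary part of the
  eigenvalue of H_0(gamma) on e^{inz}.\<close>
definition Omega :: "real \<Rightarrow> int \<Rightarrow> real \<Rightarrow> real" where
  "Omega k n \<gamma> = k ^ 3 * real_of_int n * (1 - (real_of_int n)\<^sup>2) + 3 * \<gamma>\<^sup>2 / (k * real_of_int n)"

end

theory Submission
  imports Defs
begin

text \<open>Clearing denominators, \<open>\<Omega>\<^sub>n - \<Omega>\<^sub>m\<close> factors as \<open>n - m\<close> times
  \<open>k\<^sup>3 (1 - (n\<^sup>2 + nm + m\<^sup>2)) - 3\<gamma>\<^sup>2/(knm)\<close>, so \<open>\<Omega>\<^sub>n\<close> and \<open>\<Omega>\<^sub>m\<close> collide exactly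
  when \<open>3\<gamma>\<^sup>2 = k\<^sup>4 nm (1 - (n\<^sup>2 + nm + m\<^sup>2))\<close>. For \<open>n < 0 < m\<close> the right-hand side
  is nonnegative, because \<open>n\<^sup>2 + nm + m\<^sup>2 = (n + m)\<^sup>2 - nm \<ge> 1\<close>, so a collision
  exists. Substituting the collision condition, the common value is
  \<open>k\<^sup>3 (n + m)(1 - n\<^sup>2 - m\<^sup>2)\<close>, whose last factor is negative: it vanishes
  iff \<open>m = -n\<close>.\<close>

lemma Omega_diff:
  fixes k \<gamma> :: real and n m :: int
  assumes "k \<noteq> 0" "n \<noteq> 0" "m \<noteq> 0"
  shows "Omega k n \<gamma> - Omega k m \<gamma> =
    (n - m) * (k ^ 3 * (1 - (n\<^sup>2 + n * m + m\<^sup>2)) - 3 * \<gamma>\<^sup>2 / (k * n * m))"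
  using assms unfolding Omega_def
  by (simp add: field_simps power2_eq_square power3_eq_cube)

lemma Omega_eq_Omega_iff:
  fixes k \<gamma> :: real and n m :: int
  assumes "k \<noteq> 0" "n \<noteq> 0" "m \<noteq> 0" "n \<noteq> m"
  shows "Omega k n \<gamma> = Omega k m \<gamma> \<longleftrightarrow> 3 * \<gamma>\<^sup>2 = k ^ 4 * n * m * (1 - (n\<^sup>2 + n * m + m\<^sup>2))"
proof -
  have "Omega k n \<gamma> = Omega k m \<gamma> \<longleftrightarrow>
      k ^ 3 * (1 - (n\<^sup>2 + n * m + m\<^sup>2)) = 3 * \<gamma>\<^sup>2 / (k * n * m)"
    using Omega_diff[OF assms(1-3), of \<gamma>] assms(4) by auto
  also have "\<dots> \<longleftrightarrow> 3 * \<gamma>\<^sup>2 = k ^ 4 * n * m * (1 - (n\<^sup>2 + n * m + m\<^sup>2))"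
    using assms(1-3) by (auto simp: field_simps power4_eq_xxxx power3_eq_cube)
  finally show ?thesis .
qed

lemma collision_rhs_nonneg:
  fixes k :: real and n m :: int
  assumes "n < 0" "0 < m"
  shows "k ^ 4 * n * m * (1 - (n\<^sup>2 + n * m + m\<^sup>2)) \<ge> 0"
proof -
  have "n * m < 0"
    using assms by (simp add: mult_neg_pos)
  moreover have "n\<^sup>2 + n * m + m\<^sup>2 = (n + m)\<^sup>2 - n * m"
    by (simp add: power2_eq_square algebra_simps)
  then have "n\<^sup>2 + n * m + m\<^sup>2 \<ge> 1"
    using \<open>n * m < 0\<close> zero_le_power2[of "n + m"] by linarith
  ultimately have "n * m * (1 - (n\<^sup>2 + n * m + m\<^sup>2)) \<ge> 0"
    by (simp add: mult_nonpos_nonpos)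
  then have "real_of_int n * m * (1 - (n\<^sup>2 + n * m + m\<^sup>2)) \<ge> 0"
    by (metis of_int_0_le_iff of_int_diff of_int_add of_int_mult of_int_power of_int_1)
  then show ?thesis
    by (simp add: mult.assoc)
qed

lemma Omega_collision_exists:
  fixes k :: real and n m :: int
  assumes "k \<noteq> 0" "n < 0" "0 < m"
  shows "\<exists>\<gamma>. Omega k n \<gamma> = Omega k m \<gamma>"
proof
  let ?R = "k ^ 4 * n * m * (1 - (n\<^sup>2 + n * m + m\<^sup>2))"
  have "3 * (sqrt (?R / 3))\<^sup>2 = ?R"
    using collision_rhs_nonneg[OF assms(2,3), of k] by simp
  then show "Omega k n (sqrt (?R / 3)) = Omega k m (sqrt (?R / 3))"
    using Omega_eq_Omega_iff assms by simp
qed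

lemma Omega_at_collision:
  fixes k \<gamma> :: real and n m :: int
  assumes "k \<noteq> 0" "n \<noteq> 0" "m \<noteq> 0" "n \<noteq> m"
    and "Omega k n \<gamma> = Omega k m \<gamma>"
  shows "Omega k n \<gamma> = k ^ 3 * (n + m) * (1 - n\<^sup>2 - m\<^sup>2)"
proof -
  have "3 * \<gamma>\<^sup>2 = k ^ 4 * n * m * (1 - (n\<^sup>2 + n * m + m\<^sup>2))"
    using Omega_eq_Omega_iff assms by blast
  then show ?thesis
    using assms(1-3) unfolding Omega_def
    by (simp add: field_simps power2_eq_square power3_eq_cube power4_eq_xxxx)
qed

lemma Omega_at_collision_eq_0_iff:
  fixes k \<gamma> :: real and n m :: int
  assumes "k \<noteq> 0" "n \<noteq> 0" "m \<noteq> 0" "n \<noteq> m"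
    and "Omega k n \<gamma> = Omega k m \<gamma>"
  shows "Omega k n \<gamma> = 0 \<longleftrightarrow> m = - n"
proof -
  have "n\<^sup>2 \<ge> 1" "m\<^sup>2 \<ge> 1"
    using assms(2,3)
    by (auto simp: power2_eq_square int_one_le_iff_zero_less zero_less_mult_iff linorder_neq_iff)
  then have "(real_of_int n)\<^sup>2 \<ge> 1" "(real_of_int m)\<^sup>2 \<ge> 1"
    by (metis of_int_1 of_int_le_iff of_int_power)+
  then have "1 - (real_of_int n)\<^sup>2 - (real_of_int m)\<^sup>2 \<noteq> 0"
    by linarith
  then show ?thesis
    using Omega_at_collision[OF assms] assms(1) by (simp flip: of_int_add) linarith
qed

theorem lemma3p1:
  fixes k :: real and \<Delta> :: nat and n :: int
  assumes "k > 0" and "- int \<Delta> < n" and "n < 0"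
  shows "(\<exists>\<gamma>c :: real. Omega k n \<gamma>c = Omega k (n + int \<Delta>) \<gamma>c)
       \<and> (\<forall>\<gamma>c :: real. Omega k n \<gamma>c = Omega k (n + int \<Delta>) \<gamma>c \<longrightarrow>
             (Omega k n \<gamma>c = 0 \<longleftrightarrow> (even \<Delta> \<and> 2 * n = - int \<Delta>)))
       \<and> (even \<Delta> \<and> 2 * n = - int \<Delta> \<longrightarrow> n + int \<Delta> = - n)"
proof -
  have k: "k \<noteq> 0" and m: "0 < n + int \<Delta>"
    using assms by auto
  have "Omega k n \<gamma> = 0 \<longleftrightarrow> n + int \<Delta> = - n"
    if "Omega k n \<gamma> = Omega k (n + int \<Delta>) \<gamma>" for \<gamma>
    by (rule Omega_at_collision_eq_0_iff[OF k _ _ _ that]) (use m \<open>n < 0\<close> in auto)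
  moreover have "n + int \<Delta> = - n \<longleftrightarrow> even \<Delta> \<and> 2 * n = - int \<Delta>"
    by presburger
  ultimately show ?thesis
    using Omega_collision_exists[OF k \<open>n < 0\<close> m] by auto
qed

end
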